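(* Let $[a(n)]\in\mathbb{L}$. Then: (1) $[a(n)]\in\mathbb{B}$; (2) for every integer $m\ge2$, $[a(mn)]=[a(n)]$; (3) $\pi_{\mathbb{E}}([a(n)])=0$, i.e. $\limsup_{n\to\infty}\frac{\log a(n)}{n}=0$.
   Context: Let $\mathcal{O}$ be the set of non-decreasing sequences $a:\mathbb{N}\to[0,\infty)$, $a\approx b$ iff $c_1a(n)\le b(n)\le c_2a(n)$ for all $n$ for some constants $0<c_1\le c_2$, $\mathbb{O}=\mathcal{O}/\!\approx$ with classes $[a(n)]$. A class $[a(n)]$ has the linearly invariant property (LIP) if $[a(mn)]=[a(n)]$ for some integer $m\ge2$; $\mathbb{L}$ is the set of such classes. It has the bounded jump property if there is $C>0$ with $a(n+1)\le Ca(n)$ for all $n$; $\mathbb{B}$ is the set of such classes. For $[a(n)]\in\mathbb{O}$, $\pi_{\mathbb{E}}([a(n)])=\inf\{t>0:[a(n)]\le[e^{tn}]\}$ (with value $\infty$ if the set is empty), which equals $\limsup_{n\to\infty}\frac{\log a(n)}{n}$. *)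

theory Defs
  imports "HOL-Analysis.Analysis"
begin

text \<open>Sequences are indexed by the positive integers 1,2,3,...; values at index 0 are ignored.\<close>

definition seqO :: "(nat \<Rightarrow> real) \<Rightarrow> bool" where
  "seqO a \<longleftrightarrow> (\<forall>n\<ge>1. 0 \<le> a n) \<and> (\<forall>m n. 1 \<le> m \<longrightarrow> m \<le> n \<longrightarrow> a m \<le> a n)"

definition equivO :: "(nat \<Rightarrow> real) \<Rightarrow> (nat \<Rightarrow> real) \<Rightarrow> bool" where
  "equivO a b \<longleftrightarrow> (\<exists>c1 c2. 0 < c1 \<and> c1 \<le> c2 \<and>
      (\<forall>n\<ge>1. c1 * a n \<le> b n \<and> b n \<le> c2 * a n))"

definition leO :: "(nat \<Rightarrow> real) \<Rightarrow> (nat \<Rightarrow> real) \<Rightarrow> bool" where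
  "leO a b \<longleftrightarrow> (\<exists>C>0. \<forall>n\<ge>1. a n \<le> C * b n)"

definition LIP :: "(nat \<Rightarrow> real) \<Rightarrow> bool" where
  "LIP a \<longleftrightarrow> (\<exists>m::nat. m \<ge> 2 \<and> equivO (\<lambda>n. a (m * n)) a)"

definition bounded_jump :: "(nat \<Rightarrow> real) \<Rightarrow> bool" where
  "bounded_jump a \<longleftrightarrow> (\<exists>C>0. \<forall>n\<ge>1. a (n + 1) \<le> C * a n)"

definition piE :: "(nat \<Rightarrow> real) \<Rightarrow> ereal" where
  "piE a = Inf (ereal ` {t::real. t > 0 \<and> leO a (\<lambda>n. exp (t * real n))})"

end

theory Submission
  imports Defs
begin

text \<open>
  Write \<open>[a(mn)] \<le> [a(n)]\<close> for \<open>a(mn) \<le> C a(n)\<close>; the half of LIP that matters is this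
  inequality for a single \<open>m \<ge> 2\<close>. Iterating it gives \<open>a(m\<^sup>k n) \<le> C\<^sup>k a(n)\<close>, and by monotonicity
  every dilation \<open>a(m'n)\<close> is squeezed between \<open>a(n)\<close> and some \<open>a(m\<^sup>k n)\<close>, while \<open>a(n+1) \<le> a(mn)\<close>
  gives bounded jumps. For subexponential growth, pass from \<open>n\<close> to \<open>\<lceil>n/m\<rceil> \<le> (n+1)/2\<close>: this
  costs a factor \<open>C\<close> but decreases \<open>n\<close> by about \<open>n/2\<close>, and \<open>exp(t n/2)\<close> outgrows \<open>C\<close> once \<open>n\<close>
  is large, so \<open>a(n) \<le> C' exp(t n)\<close> follows by strong induction for every \<open>t > 0\<close>.
\<close>

lemma seqO_nonneg: "seqO a \<Longrightarrow> 1 \<le> n \<Longrightarrow> 0 \<le> a n"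
  unfolding seqO_def by blast

lemma seqO_mono: "seqO a \<Longrightarrow> 1 \<le> p \<Longrightarrow> p \<le> q \<Longrightarrow> a p \<le> a q"
  unfolding seqO_def by blast

lemma equivO_imp_leO:
  assumes "equivO a b"
  shows "leO a b"
proof -
  obtain c1 where c1: "0 < c1" and le: "\<forall>n\<ge>1. c1 * a n \<le> b n"
    using assms unfolding equivO_def by blast
  have "a n \<le> (1 / c1) * b n" if "n \<ge> 1" for n
    using le that c1 by (simp add: field_simps)
  with c1 show ?thesis unfolding leO_def by (meson divide_pos_pos zero_less_one)
qed

lemma leO_dilation_power:
  fixes a :: "nat \<Rightarrow> real"
  assumes m: "1 \<le> m" and dil: "leO (\<lambda>n. a (m * n)) a"
  shows "leO (\<lambda>n. a (m ^ k * n)) a"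
proof -
  obtain C where C: "C > 0" and step: "\<forall>n\<ge>1. a (m * n) \<le> C * a n"
    using dil unfolding leO_def by blast
  have "a (m ^ k * n) \<le> C ^ k * a n" if n: "n \<ge> 1" for n
  proof (induction k)
    case 0
    then show ?case by simp
  next
    case (Suc k)
    have "1 \<le> m ^ k * n" using m n by simp
    then have "a (m * (m ^ k * n)) \<le> C * a (m ^ k * n)" using step by blast
    also have "\<dots> \<le> C * (C ^ k * a n)" using Suc C by simp
    finally show ?case by (simp add: mult.assoc)
  qed
  with C show ?thesis unfolding leO_def by (meson zero_less_power)
qed

lemma leO_dilation_antimono:
  fixes a :: "nat \<Rightarrow> real"
  assumes a: "seqO a" and "1 \<le> m'" "m' \<le> m" and dil: "leO (\<lambda>n. a (m * n)) a"
  shows "leO (\<lambda>n. a (m' * n)) a"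
proof -
  obtain C where C: "C > 0" and le: "\<forall>n\<ge>1. a (m * n) \<le> C * a n"
    using dil unfolding leO_def by blast
  have "a (m' * n) \<le> C * a n" if "n \<ge> 1" for n
    using seqO_mono[OF a, of "m' * n" "m * n"] le that assms(2,3) by fastforce
  with C show ?thesis unfolding leO_def by blast
qed

lemma seqO_equivO_dilation:
  fixes a :: "nat \<Rightarrow> real"
  assumes a: "seqO a" and m: "1 \<le> m" and dil: "leO (\<lambda>n. a (m * n)) a"
  shows "equivO (\<lambda>n. a (m * n)) a"
proof -
  obtain C where C: "C > 0" and le: "\<forall>n\<ge>1. a (m * n) \<le> C * a n"
    using dil unfolding leO_def by blast
  define K where "K = max 1 C"
  have K: "K \<ge> 1" unfolding K_def by simp
  have "(1 / K) * a (m * n) \<le> a n \<and> a n \<le> 1 * a (m * n)" if n: "n \<ge> 1" for n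
  proof
    have "a (m * n) \<le> C * a n" using le n by blast
    also have "\<dots> \<le> K * a n"
      unfolding K_def using seqO_nonneg[OF a n] by (simp add: mult_right_mono)
    finally have "a (m * n) \<le> K * a n" .
    then show "(1 / K) * a (m * n) \<le> a n" using K by (simp add: field_simps)
    show "a n \<le> 1 * a (m * n)" using seqO_mono[OF a n, of "m * n"] m by simp
  qed
  moreover have "0 < 1 / K" "1 / K \<le> 1" using K by auto
  ultimately show ?thesis unfolding equivO_def by (intro exI[of _ "1 / K"] exI[of _ 1]) simp
qed

lemma seqO_equivO_all_dilations:
  fixes a :: "nat \<Rightarrow> real"
  assumes a: "seqO a" and m: "2 \<le> m" and dil: "leO (\<lambda>n. a (m * n)) a" and m': "1 \<le> m'"
  shows "equivO (\<lambda>n. a (m' * n)) a"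
proof -
  have "m' < 2 ^ m'" by (rule less_exp)
  also have "\<dots> \<le> m ^ m'" using m by (simp add: power_mono)
  finally have "m' \<le> m ^ m'" by simp
  moreover have "leO (\<lambda>n. a (m ^ m' * n)) a"
    using m dil by (intro leO_dilation_power) auto
  ultimately have "leO (\<lambda>n. a (m' * n)) a"
    by (rule leO_dilation_antimono[OF a m'])
  with a m' show ?thesis by (rule seqO_equivO_dilation)
qed

lemma seqO_bounded_jump:
  fixes a :: "nat \<Rightarrow> real"
  assumes a: "seqO a" and m: "2 \<le> m" and dil: "leO (\<lambda>n. a (m * n)) a"
  shows "bounded_jump a"
proof -
  obtain C where C: "C > 0" and le: "\<forall>n\<ge>1. a (m * n) \<le> C * a n"
    using dil unfolding leO_def by blast
  have "a (n + 1) \<le> C * a n" if n: "n \<ge> 1" for n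
  proof -
    have "2 * n \<le> m * n" using m by simp
    then have "n + 1 \<le> m * n" using n by linarith
    then have "a (n + 1) \<le> a (m * n)" by (intro seqO_mono[OF a]) auto
    with le n show ?thesis by fastforce
  qed
  with C show ?thesis unfolding bounded_jump_def by blast
qed

text \<open>For \<open>n \<ge> 1\<close>, \<open>(n - 1) div m + 1\<close> is \<open>\<lceil>n/m\<rceil>\<close>.\<close>
lemma ceiling_quotient_bounds:
  fixes m n :: nat
  assumes "2 \<le> m" "1 \<le> n"
  shows "n \<le> m * ((n - 1) div m + 1)" and "2 * ((n - 1) div m + 1) \<le> n + 1"
proof -
  have "n - 1 < m * ((n - 1) div m + 1)"
  proof -
    have "m * ((n - 1) div m) + (n - 1) mod m = n - 1" by (rule mult_div_mod_eq)
    moreover have "(n - 1) mod m < m" using assms(1) by simp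
    moreover have "m * ((n - 1) div m + 1) = m * ((n - 1) div m) + m" by simp
    ultimately show ?thesis by linarith
  qed
  then show "n \<le> m * ((n - 1) div m + 1)" by linarith
  have "2 * ((n - 1) div m) \<le> 2 * ((n - 1) div 2)"
    using assms(1) by (simp add: div_le_mono2)
  also have "\<dots> \<le> n - 1" by simp
  finally have "2 * ((n - 1) div m) \<le> n - 1" .
  moreover have "2 * q \<le> n - 1 \<Longrightarrow> 2 * (q + 1) \<le> n + 1" for q
    using assms(2) by arith
  ultimately show "2 * ((n - 1) div m + 1) \<le> n + 1" by blast
qed

lemma exp_dominates_linear_gap:
  fixes c t x y :: real
  assumes "c \<le> t * (x - y)"
  shows "c * exp (t * y) \<le> exp (t * x)"
proof -
  have "c \<le> exp (t * (x - y))"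
    using assms exp_ge_add_one_self[of "t * (x - y)"] by linarith
  then have "c * exp (t * y) \<le> exp (t * (x - y)) * exp (t * y)" by simp
  also have "\<dots> = exp (t * x)" by (simp flip: exp_add add: algebra_simps)
  finally show ?thesis .
qed

lemma seqO_subexponential:
  fixes a :: "nat \<Rightarrow> real"
  assumes a: "seqO a" and m: "2 \<le> m" and dil: "leO (\<lambda>n. a (m * n)) a" and t: "0 < t"
  shows "leO a (\<lambda>n. exp (t * real n))"
proof -
  obtain c where c: "c > 0" and step: "\<forall>n\<ge>1. a (m * n) \<le> c * a n"
    using dil unfolding leO_def by blast
  obtain N :: nat where N: "max 1 (2 * c / t) \<le> real N"
    using real_arch_simple by blast
  define C where "C = max 1 (a N)"
  have C: "C > 0" unfolding C_def by simp
  have "a n \<le> C * exp (t * real n)" if "n \<ge> 1" for n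
    using that
  proof (induction n rule: less_induct)
    case (less n)
    show ?case
    proof (cases "n \<le> N")
      case True
      then have "a n \<le> C" using seqO_mono[OF a less.prems True] unfolding C_def by linarith
      also have "\<dots> \<le> C * exp (t * real n)" using C t by simp
      finally show ?thesis .
    next
      case False
      define n' where "n' = (n - 1) div m + 1"
      have cover: "n \<le> m * n'" and halve: "2 * n' \<le> n + 1"
        unfolding n'_def using ceiling_quotient_bounds[OF m less.prems] by auto
      have n': "1 \<le> n'" "n' < n" using halve False N unfolding n'_def by auto
      have "c \<le> t * (real N / 2)" using N t by (simp add: field_simps)
      also have "\<dots> \<le> t * (real n - real n')" using halve False t by simp
      finally have gap: "c \<le> t * (real n - real n')" .
      have "a n \<le> a (m * n')" using seqO_mono[OF a less.prems cover] .
      also have "\<dots> \<le> c * a n'" using step n'(1) by blast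
      also have "\<dots> \<le> c * (C * exp (t * real n'))" using less.IH n' c by simp
      also have "\<dots> = C * (c * exp (t * real n'))" by simp
      also have "\<dots> \<le> C * exp (t * real n)"
        using exp_dominates_linear_gap[OF gap] C by simp
      finally show ?thesis .
    qed
  qed
  with C show ?thesis unfolding leO_def by blast
qed

lemma piE_eq_0_if_subexponential:
  assumes "\<forall>t>0. leO a (\<lambda>n. exp (t * real n))"
  shows "piE a = 0"
proof -
  have "{t. t > 0 \<and> leO a (\<lambda>n. exp (t * real n))} = {0<..}"
    using assms by auto
  moreover have "Inf (ereal ` {0<..}) = ereal (Inf {0::real<..})"
    by (rule ereal_Inf'[symmetric]) auto
  ultimately show ?thesis unfolding piE_def by simp
qed

theorem proposition2p7:
  fixes a :: "nat \<Rightarrow> real"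
  assumes "seqO a" and "LIP a"
  shows "bounded_jump a \<and> (\<forall>m::nat. m \<ge> 2 \<longrightarrow> equivO (\<lambda>n. a (m * n)) a) \<and> piE a = 0"
proof -
  obtain m where m: "2 \<le> m" and "equivO (\<lambda>n. a (m * n)) a"
    using assms(2) unfolding LIP_def by blast
  then have dil: "leO (\<lambda>n. a (m * n)) a" by (intro equivO_imp_leO)
  have "bounded_jump a" by (rule seqO_bounded_jump[OF assms(1) m dil])
  moreover have "\<forall>m'::nat. m' \<ge> 2 \<longrightarrow> equivO (\<lambda>n. a (m' * n)) a"
    using seqO_equivO_all_dilations[OF assms(1) m dil] by simp
  moreover have "piE a = 0"
    using seqO_subexponential[OF assms(1) m dil] by (intro piE_eq_0_if_subexponential) blast
  ultimately show ?thesis by blast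
qed

end
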